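(* Let $n,d,c\in\mathbb{N}$ with $d\ge 50$ and $c\in[d]$, let $\mathcal{F}\subseteq 2^{[n]}$ be a hereditary family with $\delta(\mathcal{F})\ge 2^{d-1}-c+1$, and let $P$ be an isolated pile of $\mathcal{F}$ with $\sum_{x\in P}\omega_{\mathcal{F}}(x)<2^d-c$. Let $u\ge 1$ be the number of good vertices in $P$. Then every $N\in\mathcal{N}$ satisfies $|N|\le f_u$.
   Context: A family is hereditary if it is closed under taking subsets. $d_{\mathcal{F}}(x)=|\{F\in\mathcal{F}:x\in F\}|$, $\delta(\mathcal{F})=\min_x d_{\mathcal{F}}(x)$, $N(x)=\bigcup_{x\in F\in\mathcal{F}}F$. The weight of $x$ is $\omega_{\mathcal{F}}(x)=\sum_{x\in F\in\mathcal{F}}\frac{1}{|F|}$. A vertex $x$ is good if $|N(x)|\ge d+1$ and bad if $|N(x)|=d$. A set $P\subseteq[n]$ with $|P|=d$ is a pile of $\mathcal{F}$ if $P\subseteq N(y)$ for every $y\in P$, and there exists $z\in P$ with $N(z)=P$; a pile is isolated if it is disjoint from every other pile. Given the pile $P$, let $\mathcal{G}=\{S\subseteq P: S\in\mathcal{F}\}$, $\mathcal{M}=2^{P}\setminus\mathcal{G}$, and $\mathcal{N}=\{P\setminus M: M\in\mathcal{M}\}$. For a positive integer $u$, $f_u$ is the unique integer $f$ with $2^{f}-f\le u<2^{f+1}-(f+1)$. *)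

theory Defs
  imports Complex_Main
begin

definition hereditary :: "nat set set \<Rightarrow> bool" where
  "hereditary F \<longleftrightarrow> (\<forall>A\<in>F. \<forall>B. B \<subseteq> A \<longrightarrow> B \<in> F)"

definition degree :: "nat set set \<Rightarrow> nat \<Rightarrow> nat" where
  "degree F x = card {A \<in> F. x \<in> A}"

definition min_degree :: "nat \<Rightarrow> nat set set \<Rightarrow> nat" where
  "min_degree n F = Min ((\<lambda>x. degree F x) ` {1..n})"

definition nbhd :: "nat set set \<Rightarrow> nat \<Rightarrow> nat set" where
  "nbhd F x = \<Union> {A \<in> F. x \<in> A}"

definition weight :: "nat set set \<Rightarrow> nat \<Rightarrow> real" where
  "weight F x = (\<Sum>A \<in> {A \<in> F. x \<in> A}. 1 / real (card A))"

definition good :: "nat set set \<Rightarrow> nat \<Rightarrow> nat \<Rightarrow> bool" where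
  "good F d x \<longleftrightarrow> card (nbhd F x) \<ge> d + 1"

definition bad :: "nat set set \<Rightarrow> nat \<Rightarrow> nat \<Rightarrow> bool" where
  "bad F d x \<longleftrightarrow> card (nbhd F x) = d"

definition is_pile :: "nat \<Rightarrow> nat \<Rightarrow> nat set set \<Rightarrow> nat set \<Rightarrow> bool" where
  "is_pile n d F P \<longleftrightarrow> P \<subseteq> {1..n} \<and> card P = d \<and>
     (\<forall>y\<in>P. P \<subseteq> nbhd F y) \<and> (\<exists>z\<in>P. nbhd F z = P)"

definition isolated_pile :: "nat \<Rightarrow> nat \<Rightarrow> nat set set \<Rightarrow> nat set \<Rightarrow> bool" where
  "isolated_pile n d F P \<longleftrightarrow> is_pile n d F P \<and>
     (\<forall>Q. is_pile n d F Q \<and> Q \<noteq> P \<longrightarrow> P \<inter> Q = {})"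

definition pile_G :: "nat set set \<Rightarrow> nat set \<Rightarrow> nat set set" where
  "pile_G F P = {S. S \<subseteq> P \<and> S \<in> F}"

definition pile_M :: "nat set set \<Rightarrow> nat set \<Rightarrow> nat set set" where
  "pile_M F P = Pow P - pile_G F P"

definition pile_N :: "nat set set \<Rightarrow> nat set \<Rightarrow> nat set set" where
  "pile_N F P = (\<lambda>M. P - M) ` pile_M F P"

definition f_of :: "nat \<Rightarrow> nat" where
  "f_of u = (THE f::nat. (2::int)^f - int f \<le> int u \<and> int u < 2^(f+1) - int (f+1))"

end

theory Submission
  imports Defs
begin

text \<open>
  The members of \<open>\<N>\<close> are the complements in \<open>P\<close> of the subsets of \<open>P\<close> missing from \<open>\<F>\<close>,
  so \<open>\<N>\<close> is a down-set. Counting the sets through a vertex \<open>x \<in> P\<close> gives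
  \<open>d(x) + #{C \<in> \<N>. x \<notin> C} = 2^(d-1) + #{A \<in> \<F>. x \<in> A, \<not> A \<subseteq> P}\<close>; hence by the degree bound a bad
  vertex avoids fewer than \<open>c\<close> members of \<open>\<N>\<close>, and the weight bound says that the sets leaving
  \<open>P\<close> contribute less than \<open>|\<N>| - c + 1\<close> to the weight of \<open>P\<close>.

  Let \<open>N \<in> \<N>\<close> with \<open>|N| = k\<close>. If some bad vertex \<open>y\<close> lies outside \<open>N\<close>, then all subsets of \<open>N\<close>
  and the singletons of the other bad vertices outside \<open>N\<close> are members of \<open>\<N>\<close> avoiding \<open>y\<close>,
  which yields \<open>2\<^sup>k \<le> u + k\<close>. Otherwise \<open>P - N\<close> consists of good vertices and it suffices to
  show \<open>2\<^sup>k \<le> d\<close>. A bad vertex forces \<open>|\<N>| < 2d\<close>, so all members of \<open>\<N>\<close>, and (by the weight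
  bound) all sets leaving \<open>P\<close> and meeting it, are small. If \<open>2\<^sup>k > d\<close>, double counting the
  degrees of the vertices of \<open>P - N\<close> against the weight of the sets leaving \<open>P\<close>, which is at
  least half the number of good vertices, gives a contradiction.
\<close>

lemma two_pow_minus_self_mono:
  assumes "a \<le> b"
  shows "(2::int) ^ a - int a \<le> 2 ^ b - int b"
proof (rule lift_Suc_mono_le[OF _ assms])
  fix i :: nat
  have "(1::int) \<le> 2 ^ i" by simp
  then show "(2::int) ^ i - int i \<le> 2 ^ Suc i - int (Suc i)" by simp
qed

lemma f_of_eqI:
  assumes "(2::int) ^ f - int f \<le> int u" and "int u < 2 ^ (f + 1) - int (f + 1)"
  shows "f_of u = f"
  unfolding f_of_def
proof (rule the_equality)
  fix g
  assume g: "(2::int) ^ g - int g \<le> int u \<and> int u < 2 ^ (g + 1) - int (g + 1)"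
  show "g = f"
  proof (rule ccontr)
    assume "g \<noteq> f"
    then have "g + 1 \<le> f \<or> f + 1 \<le> g" by linarith
    then show False
      using g assms two_pow_minus_self_mono[of "g + 1" f] two_pow_minus_self_mono[of "f + 1" g]
      by fastforce
  qed
qed (use assms in simp)

lemma f_of_upper_bound:
  assumes "1 \<le> u"
  shows "int u < 2 ^ (f_of u + 1) - int (f_of u + 1)"
proof -
  let ?Q = "\<lambda>f. int u < 2 ^ (f + 1) - int (f + 1)"
  define f where "f = (LEAST f. ?Q f)"
  have "int (Suc u) \<le> int (2 ^ u)"
    using Suc_leI[OF less_exp[of u]] by (simp only: of_nat_le_iff)
  then have "?Q u"
    by simp
  then have Qf: "?Q f"
    unfolding f_def by (rule LeastI)
  have "f \<noteq> 0"
    using Qf assms by (intro notI) simp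
  then have "\<not> ?Q (f - 1)"
    unfolding f_def by (intro not_less_Least) simp
  then have "(2::int) ^ f - int f \<le> int u"
    using \<open>f \<noteq> 0\<close> by simp
  then show ?thesis
    using f_of_eqI Qf by simp
qed

lemma le_f_of:
  assumes "1 \<le> u" and "(2::int) ^ k - int k \<le> int u"
  shows "k \<le> f_of u"
proof (rule ccontr)
  assume "\<not> k \<le> f_of u"
  then have "(2::int) ^ (f_of u + 1) - int (f_of u + 1) \<le> 2 ^ k - int k"
    by (intro two_pow_minus_self_mono) simp
  with f_of_upper_bound[OF assms(1)] assms(2) show False
    by simp
qed

lemma twelve_mult_le_two_pow:
  assumes "7 \<le> j"
  shows "12 * j \<le> (2::nat) ^ j"
  using assms
proof (induction j rule: nat_induct_at_least)
  case (Suc j)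
  have "(2::nat) ^ 7 \<le> 2 ^ j"
    using Suc.hyps by (intro power_increasing) auto
  with Suc.IH show ?case
    by simp
qed simp

lemma four_square_le_two_pow:
  assumes "13 \<le> a"
  shows "4 * a\<^sup>2 \<le> (2::nat) ^ (a - 2)"
  using assms
proof (induction a rule: nat_induct_at_least)
  case (Suc a)
  have "13 * a \<le> a * a"
    using Suc.hyps by simp
  then have "4 + 8 * a \<le> 4 * (a * a)"
    using Suc.hyps by linarith
  then have "4 * (Suc a)\<^sup>2 \<le> 2 * (4 * a\<^sup>2)"
    using Suc.hyps by (simp add: power2_eq_square algebra_simps)
  also have "\<dots> \<le> 2 * 2 ^ (a - 2)"
    using Suc.IH by simp
  also have "\<dots> = 2 ^ Suc (a - 2)"
    by simp
  also have "Suc (a - 2) = Suc a - 2"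
    using Suc.hyps by simp
  finally show ?case .
qed simp

lemma six_mult_le_if_two_pow_le:
  assumes "50 \<le> d" and "(2::nat) ^ j \<le> 2 * d"
  shows "6 * j \<le> d"
proof (rule ccontr)
  assume "\<not> 6 * j \<le> d"
  then have "9 \<le> j"
    using assms by linarith
  with twelve_mult_le_two_pow[of j] assms \<open>\<not> 6 * j \<le> d\<close> show False
    by linarith
qed

lemma card_filter_add_card_filter_not:
  assumes "finite A"
  shows "card {x \<in> A. Q x} + card {x \<in> A. \<not> Q x} = card A"
proof -
  have "card ({x \<in> A. Q x} \<union> {x \<in> A. \<not> Q x}) = card {x \<in> A. Q x} + card {x \<in> A. \<not> Q x}"
    using assms by (intro card_Un_disjoint) auto
  moreover have "{x \<in> A. Q x} \<union> {x \<in> A. \<not> Q x} = A"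
    by blast
  ultimately show ?thesis
    by simp
qed

lemma card_supersets_of_point:
  assumes "finite P" and "x \<in> P"
  shows "card {S. S \<subseteq> P \<and> x \<in> S} = 2 ^ (card P - 1)"
proof -
  have "{S. S \<subseteq> P \<and> x \<in> S} = insert x ` Pow (P - {x})"
  proof (intro equalityI subsetI)
    fix S
    assume "S \<in> {S. S \<subseteq> P \<and> x \<in> S}"
    then show "S \<in> insert x ` Pow (P - {x})"
      by (intro image_eqI[of _ _ "S - {x}"]) auto
  qed (use assms(2) in auto)
  moreover have "inj_on (insert x) (Pow (P - {x}))"
    by (rule inj_onI) (auto simp: insert_ident)
  ultimately show ?thesis
    using assms by (simp add: card_image card_Pow)
qed

lemma sum_over_incidences:
  fixes g :: "'a set \<Rightarrow> 'b::comm_semiring_1"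
  assumes "finite P" and "finite F"
  shows "(\<Sum>x\<in>P. \<Sum>A\<in>{A \<in> F. x \<in> A}. g A) = (\<Sum>A\<in>F. of_nat (card (A \<inter> P)) * g A)"
proof -
  have "(\<Sum>x\<in>P. \<Sum>A\<in>{A \<in> F. x \<in> A}. g A) = (\<Sum>A\<in>F. \<Sum>x\<in>{x \<in> P. x \<in> A}. g A)"
    using assms by (rule sum.swap_restrict)
  also have "\<dots> = (\<Sum>A\<in>F. of_nat (card (A \<inter> P)) * g A)"
    by (intro sum.cong refl) (simp add: Int_def conj_commute)
  finally show ?thesis .
qed

lemma card_containing_le_card_avoiding:
  assumes "finite D" and "\<And>C C'. C \<in> D \<Longrightarrow> C' \<subseteq> C \<Longrightarrow> C' \<in> D"
  shows "card {C \<in> D. z \<in> C} \<le> card {C \<in> D. z \<notin> C}"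
proof (rule card_inj_on_le)
  show "inj_on (\<lambda>C. C - {z}) {C \<in> D. z \<in> C}"
    by (rule inj_onI) (metis mem_Collect_eq insert_Diff)
  show "(\<lambda>C. C - {z}) ` {C \<in> D. z \<in> C} \<subseteq> {C \<in> D. z \<notin> C}"
    using assms(2) by blast
qed (use assms(1) in simp)

lemma finite_member_if_hereditary:
  assumes "finite F" and "hereditary F" and "A \<in> F"
  shows "finite A"
proof -
  have "Pow A \<subseteq> F"
    using assms(2,3) unfolding hereditary_def by blast
  then show ?thesis
    using assms(1) finite_subset by fastforce
qed

lemma pile_N_iff: "C \<in> pile_N F P \<longleftrightarrow> C \<subseteq> P \<and> P - C \<notin> F"
proof
  assume "C \<in> pile_N F P"
  then obtain M where "M \<subseteq> P" "M \<notin> F" "C = P - M"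
    unfolding pile_N_def pile_M_def pile_G_def by auto
  moreover have "P - (P - M) = M"
    using \<open>M \<subseteq> P\<close> by auto
  ultimately show "C \<subseteq> P \<and> P - C \<notin> F"
    by auto
next
  assume "C \<subseteq> P \<and> P - C \<notin> F"
  then have "P - C \<in> pile_M F P" and "C = P - (P - C)"
    unfolding pile_M_def pile_G_def by auto
  then show "C \<in> pile_N F P"
    unfolding pile_N_def by blast
qed

lemma pile_N_downward_closed:
  assumes "hereditary F" and "C \<in> pile_N F P" and "C' \<subseteq> C"
  shows "C' \<in> pile_N F P"
proof -
  have "C' \<subseteq> P" and "P - C \<notin> F"
    using assms(2,3) by (auto simp: pile_N_iff)
  moreover have "P - C \<subseteq> P - C'"
    using assms(3) by blast
  ultimately show ?thesis
    using assms(1) unfolding pile_N_iff hereditary_def by blast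
qed

lemma finite_pile_N: "finite P \<Longrightarrow> finite (pile_N F P)"
  unfolding pile_N_def pile_M_def by simp

lemma card_pile_G_add_card_pile_N:
  assumes "finite P"
  shows "card (pile_G F P) + card (pile_N F P) = 2 ^ card P"
proof -
  have "inj_on (\<lambda>M. P - M) (Pow P)"
    by (rule inj_onI) blast
  then have "card (pile_N F P) = card (pile_M F P)"
    unfolding pile_N_def pile_M_def by (intro card_image) (blast intro: inj_on_subset)
  also have "\<dots> = card (Pow P) - card (pile_G F P)"
    unfolding pile_M_def using assms by (intro card_Diff_subset) (auto simp: pile_G_def)
  moreover have "card (pile_G F P) \<le> card (Pow P)"
    using assms by (intro card_mono) (auto simp: pile_G_def)
  ultimately show ?thesis
    using assms by (simp add: card_Pow)
qed

lemma card_pile_N_avoiding: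
  assumes "x \<in> P"
  shows "card {C \<in> pile_N F P. x \<notin> C} = card {S \<in> {S. S \<subseteq> P \<and> x \<in> S}. S \<notin> F}"
proof -
  let ?up = "{S. S \<subseteq> P \<and> x \<in> S}"
  have "{C \<in> pile_N F P. x \<notin> C} = (\<lambda>S. P - S) ` {S \<in> ?up. S \<notin> F}"
  proof (intro equalityI subsetI)
    fix C
    assume "C \<in> {C \<in> pile_N F P. x \<notin> C}"
    then obtain S where "S \<subseteq> P" "S \<notin> F" "C = P - S" "x \<notin> C"
      unfolding pile_N_def pile_M_def pile_G_def by auto
    then show "C \<in> (\<lambda>S. P - S) ` {S \<in> ?up. S \<notin> F}"
      using assms by auto
  next
    fix C
    assume "C \<in> (\<lambda>S. P - S) ` {S \<in> ?up. S \<notin> F}"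
    then show "C \<in> {C \<in> pile_N F P. x \<notin> C}"
      unfolding pile_N_def pile_M_def pile_G_def by auto
  qed
  moreover have "inj_on (\<lambda>S. P - S) {S \<in> ?up. S \<notin> F}"
    by (rule inj_onI) blast
  ultimately show ?thesis
    by (simp add: card_image)
qed

definition outer_degree :: "nat set set \<Rightarrow> nat set \<Rightarrow> nat \<Rightarrow> nat" where
  "outer_degree F P x = card {A \<in> F. x \<in> A \<and> \<not> A \<subseteq> P}"

definition outer_weight :: "nat set set \<Rightarrow> nat set \<Rightarrow> real" where
  "outer_weight F P = (\<Sum>A\<in>{A \<in> F. \<not> A \<subseteq> P}. real (card (A \<inter> P)) / real (card A))"

lemma degree_add_card_avoiding:
  assumes "finite F" and "finite P" and "x \<in> P"
  shows "degree F x + card {C \<in> pile_N F P. x \<notin> C} = 2 ^ (card P - 1) + outer_degree F P x"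
proof -
  let ?up = "{S. S \<subseteq> P \<and> x \<in> S}"
  let ?inner = "{A \<in> F. x \<in> A \<and> A \<subseteq> P}"
  have "{A \<in> {A \<in> F. x \<in> A}. A \<subseteq> P} = ?inner"
    and "{A \<in> {A \<in> F. x \<in> A}. \<not> A \<subseteq> P} = {A \<in> F. x \<in> A \<and> \<not> A \<subseteq> P}"
    by blast+
  moreover have "card {A \<in> {A \<in> F. x \<in> A}. A \<subseteq> P} + card {A \<in> {A \<in> F. x \<in> A}. \<not> A \<subseteq> P}
      = card {A \<in> F. x \<in> A}"
    using assms(1) by (intro card_filter_add_card_filter_not) simp
  ultimately have "degree F x = card ?inner + outer_degree F P x"
    by (simp only: degree_def outer_degree_def)
  moreover have "card {C \<in> pile_N F P. x \<notin> C} = card {S \<in> ?up. S \<notin> F}"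
    using assms(3) by (rule card_pile_N_avoiding)
  moreover have "{S \<in> ?up. S \<in> F} = ?inner"
    by blast
  moreover have "card {S \<in> ?up. S \<in> F} + card {S \<in> ?up. S \<notin> F} = 2 ^ (card P - 1)"
  proof -
    have "?up \<subseteq> Pow P"
      by blast
    then have "finite ?up"
      using assms(2) by (simp add: finite_subset)
    then show ?thesis
      using card_supersets_of_point[OF assms(2,3)] by (simp only: card_filter_add_card_filter_not)
  qed
  ultimately show ?thesis
    by simp
qed

lemma outer_degree_eq_0:
  assumes "nbhd F x \<subseteq> P"
  shows "outer_degree F P x = 0"
proof -
  have "{A \<in> F. x \<in> A \<and> \<not> A \<subseteq> P} = {}"
    using assms unfolding nbhd_def by blast
  then show ?thesis
    unfolding outer_degree_def by (metis card.empty)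
qed

lemma sum_weight_eq:
  assumes "finite F" and "finite P" and "{} \<in> F" and "\<And>A. A \<in> F \<Longrightarrow> finite A"
  shows "(\<Sum>x\<in>P. weight F x) = real (card (pile_G F P)) - 1 + outer_weight F P"
proof -
  let ?share = "\<lambda>A. real (card (A \<inter> P)) / real (card A)"
  let ?G = "pile_G F P"
  have G: "?G = {A \<in> F. A \<subseteq> P}"
    unfolding pile_G_def by auto
  have "(\<Sum>x\<in>P. weight F x) = (\<Sum>A\<in>F. ?share A)"
    unfolding weight_def using sum_over_incidences[OF assms(2,1), of "\<lambda>A. 1 / real (card A)"]
    by simp
  also have "\<dots> = (\<Sum>A\<in>?G \<union> {A \<in> F. \<not> A \<subseteq> P}. ?share A)"
    by (rule sum.cong) (auto simp: G)
  also have "\<dots> = (\<Sum>A\<in>?G. ?share A) + outer_weight F P"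
    unfolding outer_weight_def by (rule sum.union_disjoint) (use assms(1) in \<open>auto simp: G\<close>)
  also have "(\<Sum>A\<in>?G. ?share A) = ?share {} + (\<Sum>A\<in>?G - {{}}. ?share A)"
    using assms(1,3) by (intro sum.remove) (auto simp: G)
  also have "(\<Sum>A\<in>?G - {{}}. ?share A) = (\<Sum>A\<in>?G - {{}}. 1)"
    using assms(4) by (intro sum.cong) (auto simp: G Int_absorb2)
  also have "\<dots> = real (card ?G) - 1"
  proof -
    have "0 < card ?G"
      using assms(1,3) by (auto simp: G card_gt_0_iff)
    then show ?thesis
      using assms(3) by (simp add: G of_nat_diff)
  qed
  finally show ?thesis
    by simp
qed

lemma outer_weight_nonneg: "0 \<le> outer_weight F P"
  unfolding outer_weight_def by (intro sum_nonneg) simp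

lemma outer_weight_ge_half_card:
  assumes "finite F" and "Y \<subseteq> P" and "\<And>x. x \<in> Y \<Longrightarrow> \<exists>y. y \<notin> P \<and> {x, y} \<in> F"
  shows "real (card Y) / 2 \<le> outer_weight F P"
proof -
  let ?share = "\<lambda>A. real (card (A \<inter> P)) / real (card A)"
  obtain yf where yf: "\<And>x. x \<in> Y \<Longrightarrow> yf x \<notin> P \<and> {x, yf x} \<in> F"
    using assms(3) by metis
  let ?pair = "\<lambda>x. {x, yf x}"
  have "inj_on ?pair Y"
  proof (rule inj_onI)
    fix x x'
    assume "x \<in> Y" "x' \<in> Y" "?pair x = ?pair x'"
    moreover from this have "x \<in> P" "yf x' \<notin> P" "x \<in> {x', yf x'}"
      using assms(2) yf by blast+
    ultimately show "x = x'"
      by blast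
  qed
  have share: "?share (?pair x) = 1 / 2" if "x \<in> Y" for x
  proof -
    have "?pair x \<inter> P = {x}" and "x \<noteq> yf x"
      using that assms(2) yf[OF that] by auto
    then show ?thesis
      by simp
  qed
  have "real (card Y) / 2 = (\<Sum>x\<in>Y. 1 / 2)"
    by simp
  also have "\<dots> = (\<Sum>x\<in>Y. ?share (?pair x))"
    using share by (metis (no_types, lifting) sum.cong)
  also have "\<dots> = (\<Sum>A\<in>?pair ` Y. ?share A)"
    using \<open>inj_on ?pair Y\<close> by (simp add: sum.reindex)
  also have "\<dots> \<le> outer_weight F P"
    unfolding outer_weight_def using assms(1) yf by (intro sum_mono2) auto
  finally show ?thesis .
qed

lemma outer_weight_ge_two_pow_div:
  assumes "finite F" and "hereditary F" and "A \<in> F"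
    and "x \<in> A" and "x \<in> P" and "y \<in> A" and "y \<notin> P"
  shows "2 ^ (card A - 2) / real (card A) \<le> outer_weight F P"
proof -
  let ?share = "\<lambda>A. real (card (A \<inter> P)) / real (card A)"
  let ?extend = "\<lambda>S. S \<union> {x, y}"
  let ?Bs = "?extend ` Pow (A - {x, y})"
  have "finite A"
    using assms(1-3) by (rule finite_member_if_hereditary)
  have "inj_on ?extend (Pow (A - {x, y}))"
    by (rule inj_onI) blast
  moreover have "card (A - {x, y}) = card A - 2"
  proof -
    have "x \<noteq> y" and "{x, y} \<subseteq> A"
      using assms(4-7) by auto
    then show ?thesis
      using \<open>finite A\<close> by (simp add: card_Diff_subset)
  qed
  ultimately have "card ?Bs = 2 ^ (card A - 2)"
    using \<open>finite A\<close> by (simp add: card_image card_Pow)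
  have Bs_outer: "?Bs \<subseteq> {B \<in> F. \<not> B \<subseteq> P}"
  proof
    fix B
    assume "B \<in> ?Bs"
    then have "B \<subseteq> A" and "y \<in> B"
      using assms(4,6) by auto
    then show "B \<in> {B \<in> F. \<not> B \<subseteq> P}"
      using assms(2,3,7) unfolding hereditary_def by blast
  qed
  have "1 / real (card A) \<le> ?share B" if "B \<in> ?Bs" for B
  proof -
    have "B \<subseteq> A" and "x \<in> B"
      using that assms(4,6) by auto
    then have "0 < card B" and "card B \<le> card A" and "1 \<le> card (B \<inter> P)"
      using \<open>finite A\<close> assms(5) finite_subset
      by (auto intro: card_mono simp: Suc_le_eq card_gt_0_iff)
    then show ?thesis
      by (simp add: frac_le)
  qed
  then have "real (card ?Bs) / real (card A) \<le> (\<Sum>B\<in>?Bs. ?share B)"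
    using sum_mono[of ?Bs "\<lambda>_. 1 / real (card A)" ?share] by simp
  also have "\<dots> \<le> outer_weight F P"
    unfolding outer_weight_def using assms(1) Bs_outer by (intro sum_mono2) auto
  finally show ?thesis
    using \<open>card ?Bs = 2 ^ (card A - 2)\<close> by simp
qed

lemma sum_outer_degree_le:
  assumes "finite F" and "finite P" and "\<And>A. A \<in> F \<Longrightarrow> finite A"
    and "\<And>A. A \<in> F \<Longrightarrow> \<not> A \<subseteq> P \<Longrightarrow> A \<inter> P \<noteq> {} \<Longrightarrow> q * real (card A) \<le> s"
  shows "q * (\<Sum>x\<in>P. real (outer_degree F P x)) \<le> s * outer_weight F P"
proof -
  let ?F = "{A \<in> F. \<not> A \<subseteq> P}"
  have "outer_degree F P x = card {A \<in> ?F. x \<in> A}" for x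
    unfolding outer_degree_def by (rule arg_cong[where f = card]) blast
  then have "(\<Sum>x\<in>P. real (outer_degree F P x)) = (\<Sum>x\<in>P. \<Sum>A\<in>{A \<in> ?F. x \<in> A}. 1)"
    by simp
  also have "\<dots> = (\<Sum>A\<in>?F. real (card (A \<inter> P)))"
    using sum_over_incidences[of P ?F "\<lambda>_. 1 :: real"] assms(1,2) by simp
  finally have "q * (\<Sum>x\<in>P. real (outer_degree F P x)) = (\<Sum>A\<in>?F. q * real (card (A \<inter> P)))"
    by (simp add: sum_distrib_left)
  also have "\<dots> \<le> (\<Sum>A\<in>?F. s * (real (card (A \<inter> P)) / real (card A)))"
  proof (rule sum_mono)
    fix A
    assume A: "A \<in> ?F"
    show "q * real (card (A \<inter> P)) \<le> s * (real (card (A \<inter> P)) / real (card A))"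
    proof (cases "A \<inter> P = {}")
      case False
      then have "0 < card A"
        using A assms(3) by (auto simp: card_gt_0_iff)
      then have "q * real (card (A \<inter> P)) = q * real (card A) * (real (card (A \<inter> P)) / real (card A))"
        by simp
      also have "\<dots> \<le> s * (real (card (A \<inter> P)) / real (card A))"
        using A False assms(4) by (intro mult_right_mono) auto
      finally show ?thesis .
    qed simp
  qed
  also have "\<dots> = s * outer_weight F P"
    unfolding outer_weight_def by (simp add: sum_distrib_left)
  finally show ?thesis .
qed

lemma quadratic_bounds_contradiction:
  fixes d m E T SA :: real
  assumes "0 < d" and "5 * d \<le> 6 * m" and "m / 2 \<le> E" and "E < T"
    and "6 * SA \<le> d * d" and "4 * (m * T - SA) \<le> d * E"
  shows False
proof -
  have "0 \<le> m"
    using assms(1,2) by linarith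
  then have "m * E \<le> m * T"
    using assms(4) by (intro mult_left_mono) auto
  then have "(4 * m - d) * E \<le> 4 * SA"
    using assms(6) by (simp add: algebra_simps)
  moreover have "(4 * m - d) * (m / 2) \<le> (4 * m - d) * E"
    using assms(1-3) by (intro mult_left_mono) auto
  \<comment> \<open>for \<open>m \<ge> 5d/6\<close> the left side is at least \<open>35d\<^sup>2/36\<close>, whereas \<open>4 SA \<le> 24d\<^sup>2/36\<close>\<close>
  moreover have "(4 * m - d) * (m / 2) = (m - 5 * d / 6) * (4 * m + 7 * d / 3) / 2 + 35 * (d * d) / 36"
    by (simp add: field_simps)
  moreover have "0 \<le> (m - 5 * d / 6) * (4 * m + 7 * d / 3)"
    using assms(1,2) by (intro mult_nonneg_nonneg) auto
  moreover have "0 < d * d"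
    using assms(1) by simp
  ultimately show False
    using assms(5) by linarith
qed

locale low_weight_pile =
  fixes n d c :: nat and F :: "nat set set" and P :: "nat set"
  assumes fifty_le_d: "d \<ge> 50"
    and c_range: "c \<in> {1..d}"
    and F_subset: "F \<subseteq> Pow {1..n}"
    and hereditary: "hereditary F"
    and min_degree_ge: "int (min_degree n F) \<ge> 2^(d-1) - int c + 1"
    and pile: "is_pile n d F P"
    and weight_sum_lt: "(\<Sum>x\<in>P. weight F x) < 2^d - real c"
begin

lemma finite_F: "finite F"
  using F_subset finite_subset by blast

lemma finite_member: "A \<in> F \<Longrightarrow> finite A"
  using finite_F hereditary by (rule finite_member_if_hereditary)

lemma P_subset: "P \<subseteq> {1..n}" and card_P: "card P = d"
  and P_subset_nbhd: "y \<in> P \<Longrightarrow> P \<subseteq> nbhd F y"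
  using pile unfolding is_pile_def by auto

lemma finite_P: "finite P"
  using P_subset finite_subset by blast

lemma nbhd_eq_if_not_good:
  assumes "x \<in> P" and "\<not> good F d x"
  shows "nbhd F x = P"
proof -
  have "nbhd F x \<subseteq> {1..n}"
    using F_subset unfolding nbhd_def by blast
  then have "finite (nbhd F x)"
    using finite_subset by blast
  moreover have "card (nbhd F x) \<le> card P"
    using assms(2) card_P unfolding good_def by simp
  ultimately have "P = nbhd F x"
    using P_subset_nbhd[OF assms(1)] card_seteq by blast
  then show ?thesis
    by simp
qed

lemma exists_not_good: "\<exists>z\<in>P. \<not> good F d z"
  using pile card_P unfolding is_pile_def good_def by force

lemma empty_in_F: "{} \<in> F"
proof -
  obtain z where "z \<in> P"
    using exists_not_good by blast
  then have "z \<in> nbhd F z"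
    using P_subset_nbhd by blast
  then obtain A where "A \<in> F"
    unfolding nbhd_def by blast
  then show ?thesis
    using hereditary unfolding hereditary_def by blast
qed

lemma card_avoiding_bound:
  assumes "x \<in> P"
  shows "card {C \<in> pile_N F P. x \<notin> C} + 1 \<le> outer_degree F P x + c"
proof -
  have "min_degree n F \<le> degree F x"
    unfolding min_degree_def using assms P_subset by (intro Min_le) auto
  then have "int (2 ^ (d - 1) + 1) \<le> int (degree F x + c)"
    using min_degree_ge by simp
  then have "2 ^ (d - 1) + 1 \<le> degree F x + c"
    by (simp only: of_nat_le_iff)
  moreover have "degree F x + card {C \<in> pile_N F P. x \<notin> C} = 2 ^ (d - 1) + outer_degree F P x"
    using degree_add_card_avoiding[OF finite_F finite_P assms] card_P by simp
  ultimately show ?thesis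
    by linarith
qed

lemma card_avoiding_bound_not_good:
  assumes "x \<in> P" and "\<not> good F d x"
  shows "card {C \<in> pile_N F P. x \<notin> C} + 1 \<le> c"
  using card_avoiding_bound[OF assms(1)] outer_degree_eq_0[of F x P] nbhd_eq_if_not_good[OF assms]
  by simp

lemma outer_weight_lt: "outer_weight F P < real (card (pile_N F P)) - real c + 1"
proof -
  have "real (card (pile_G F P)) + real (card (pile_N F P)) = 2 ^ d"
    using card_pile_G_add_card_pile_N[OF finite_P, of F] card_P
    by (metis of_nat_add of_nat_numeral of_nat_power)
  then show ?thesis
    using sum_weight_eq[OF finite_F finite_P empty_in_F finite_member] weight_sum_lt by simp
qed

lemma card_containing_add_card_avoiding:
  "card {C \<in> pile_N F P. x \<in> C} + card {C \<in> pile_N F P. x \<notin> C} = card (pile_N F P)"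
  using finite_pile_N[OF finite_P] by (rule card_filter_add_card_filter_not)

lemma singleton_in_pile_N:
  assumes "x \<in> P" and "\<not> good F d x"
  shows "{x} \<in> pile_N F P"
proof -
  have "c \<le> card (pile_N F P)"
    using outer_weight_lt outer_weight_nonneg[of F P] by linarith
  then have "card {C \<in> pile_N F P. x \<in> C} \<noteq> 0"
    using card_avoiding_bound_not_good[OF assms] card_containing_add_card_avoiding[of x] by linarith
  then obtain C where "C \<in> pile_N F P" and "x \<in> C"
    by (metis (no_types, lifting) card.empty empty_Collect_eq)
  then show ?thesis
    using hereditary by (auto intro: pile_N_downward_closed)
qed

lemma card_pile_N_bound: "card (pile_N F P) + 2 \<le> c + d"
proof -
  obtain z where z: "z \<in> P" "\<not> good F d z"
    using exists_not_good by blast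
  have "card {C \<in> pile_N F P. z \<in> C} \<le> card {C \<in> pile_N F P. z \<notin> C}"
    using finite_pile_N[OF finite_P] by (rule card_containing_le_card_avoiding)
      (use hereditary in \<open>rule pile_N_downward_closed\<close>)
  then show ?thesis
    using card_avoiding_bound_not_good[OF z] card_containing_add_card_avoiding[of z] c_range
    by simp
qed

lemma outer_weight_lt_d: "outer_weight F P < real d - 1"
  using outer_weight_lt card_pile_N_bound by linarith

lemma six_card_le:
  assumes "C \<in> pile_N F P"
  shows "6 * card C \<le> d"
proof (rule six_mult_le_if_two_pow_le[OF fifty_le_d])
  have "Pow C \<subseteq> pile_N F P"
    using assms hereditary by (auto intro: pile_N_downward_closed)
  then have "card (Pow C) \<le> card (pile_N F P)"
    using finite_pile_N[OF finite_P] by (intro card_mono)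
  moreover have "C \<subseteq> P"
    using assms by (simp add: pile_N_iff)
  then have "finite C"
    using finite_P by (rule finite_subset)
  ultimately have "2 ^ card C \<le> card (pile_N F P)"
    by (simp add: card_Pow)
  then show "2 ^ card C \<le> 2 * d"
    using card_pile_N_bound c_range by simp
qed

lemma four_card_le_if_outer:
  assumes "A \<in> F" and "\<not> A \<subseteq> P" and "A \<inter> P \<noteq> {}"
  shows "4 * card A \<le> d"
proof (rule ccontr)
  assume "\<not> 4 * card A \<le> d"
  then have "13 \<le> card A" and "real d < 4 * real (card A)"
    using fifty_le_d by linarith+
  obtain x y where "x \<in> A" "x \<in> P" "y \<in> A" "y \<notin> P"
    using assms(2,3) by blast
  then have "2 ^ (card A - 2) / real (card A) \<le> outer_weight F P"
    using outer_weight_ge_two_pow_div[OF finite_F hereditary assms(1)] by blast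
  moreover have "4 * real (card A) \<le> 2 ^ (card A - 2) / real (card A)"
  proof -
    have "real (4 * (card A)\<^sup>2) \<le> real (2 ^ (card A - 2))"
      using four_square_le_two_pow[OF \<open>13 \<le> card A\<close>] by (simp only: of_nat_le_iff)
    then show ?thesis
      using \<open>13 \<le> card A\<close> by (simp add: le_divide_eq power2_eq_square)
  qed
  ultimately show False
    using outer_weight_lt_d \<open>real d < 4 * real (card A)\<close> by linarith
qed

lemma card_good_le_outer_weight:
  "real (card {x \<in> P. good F d x}) / 2 \<le> outer_weight F P"
proof (rule outer_weight_ge_half_card[OF finite_F])
  fix x
  assume x: "x \<in> {x \<in> P. good F d x}"
  have "\<not> nbhd F x \<subseteq> P"
  proof
    assume "nbhd F x \<subseteq> P"
    then have "card (nbhd F x) \<le> d"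
      using card_mono[OF finite_P] card_P by simp
    with x show False
      unfolding good_def by simp
  qed
  then obtain y A where "y \<notin> P" and "A \<in> F" and "{x, y} \<subseteq> A"
    unfolding nbhd_def by blast
  moreover from this have "{x, y} \<in> F"
    using hereditary unfolding hereditary_def by blast
  ultimately show "\<exists>y. y \<notin> P \<and> {x, y} \<in> F"
    by blast
qed simp

lemma subset_P_if_in_pile_N: "N \<in> pile_N F P \<Longrightarrow> N \<subseteq> P"
  by (simp add: pile_N_iff)

lemma Pow_subset_pile_N: "N \<in> pile_N F P \<Longrightarrow> Pow N \<subseteq> pile_N F P"
  using hereditary by (auto intro: pile_N_downward_closed)

lemma two_pow_le_if_avoids_not_good:
  assumes N: "N \<in> pile_N F P" and y: "y \<in> P" "\<not> good F d y" "y \<notin> N"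
  shows "2 ^ card N \<le> card {x \<in> P. good F d x} + card N"
proof -
  let ?B = "{x \<in> P. \<not> good F d x}"
  let ?out = "{w \<in> ?B. w \<notin> N}"
  define S where "S = Pow N \<union> (\<lambda>w. {w}) ` (?out - {y})"
  have "finite N"
    using subset_P_if_in_pile_N[OF N] finite_P by (rule finite_subset)
  have "S \<subseteq> {C \<in> pile_N F P. y \<notin> C}"
    unfolding S_def using Pow_subset_pile_N[OF N] y(3) singleton_in_pile_N by auto
  then have "card S \<le> card {C \<in> pile_N F P. y \<notin> C}"
    using finite_pile_N[OF finite_P] by (intro card_mono) auto
  moreover have "card S = 2 ^ card N + (card ?out - 1)"
  proof -
    have "Pow N \<inter> (\<lambda>w. {w}) ` (?out - {y}) = {}"
      by auto
    moreover have "card ((\<lambda>w. {w}) ` (?out - {y})) = card ?out - 1"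
      using y finite_P by (subst card_image) (auto simp: inj_on_def)
    ultimately show ?thesis
      unfolding S_def using \<open>finite N\<close> finite_P by (simp add: card_Un_disjoint card_Pow)
  qed
  moreover have "1 \<le> card ?out"
    using y finite_P by (auto simp: Suc_le_eq card_gt_0_iff)
  ultimately have "2 ^ card N + card ?out \<le> d"
    using card_avoiding_bound_not_good[OF y(1,2)] c_range by simp
  moreover have "card {x \<in> P. good F d x} + card ?B = d"
    using card_filter_add_card_filter_not[OF finite_P] card_P by simp
  moreover have "card {w \<in> ?B. w \<in> N} + card ?out = card ?B"
    using finite_P by (intro card_filter_add_card_filter_not) simp
  moreover have "card {w \<in> ?B. w \<in> N} \<le> card N"
    using \<open>finite N\<close> by (intro card_mono) auto
  ultimately show ?thesis
    by linarith
qed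

lemma sum_card_containing_le:
  assumes N: "N \<in> pile_N F P" and "d < 2 ^ card N"
  shows "6 * (\<Sum>x\<in>P - N. card {C \<in> pile_N F P. x \<in> C}) \<le> d * d"
proof -
  let ?N = "pile_N F P"
  have fin: "finite ?N"
    using finite_P by (rule finite_pile_N)
  have "finite N"
    using subset_P_if_in_pile_N[OF N] finite_P by (rule finite_subset)
  have "(\<Sum>x\<in>P - N. card {C \<in> ?N. x \<in> C}) = (\<Sum>C\<in>?N. card (C \<inter> (P - N)))"
    using sum_over_incidences[of "P - N" ?N "\<lambda>_. 1 :: nat"] finite_P fin by simp
  also have "\<dots> = (\<Sum>C\<in>?N - Pow N. card (C \<inter> (P - N)))"
  proof (rule sum.mono_neutral_right)
    show "\<forall>C\<in>?N - (?N - Pow N). card (C \<inter> (P - N)) = 0"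
      by (auto intro!: arg_cong[where f = card, of _ "{}", simplified])
  qed (use fin in auto)
  also have "\<dots> \<le> (\<Sum>C\<in>?N - Pow N. card C)"
  proof (intro sum_mono card_mono)
    fix C
    assume "C \<in> ?N - Pow N"
    then show "finite C"
      using subset_P_if_in_pile_N finite_P finite_subset by blast
  qed auto
  finally have "6 * (\<Sum>x\<in>P - N. card {C \<in> ?N. x \<in> C}) \<le> (\<Sum>C\<in>?N - Pow N. 6 * card C)"
    by (simp add: sum_distrib_left[symmetric])
  also have "\<dots> \<le> card (?N - Pow N) * d"
    using six_card_le sum_mono[of "?N - Pow N" "\<lambda>C. 6 * card C" "\<lambda>_. d"] by simp
  also have "\<dots> \<le> d * d"
  proof -
    have "card (?N - Pow N) = card ?N - 2 ^ card N"
      using Pow_subset_pile_N[OF N] \<open>finite N\<close> by (simp add: card_Diff_subset card_Pow)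
    then have "card (?N - Pow N) \<le> d"
      using card_pile_N_bound c_range assms(2) by auto
    then show ?thesis
      by (rule mult_le_mono1)
  qed
  finally show ?thesis .
qed

lemma four_sum_outer_degree_le:
  "4 * (\<Sum>x\<in>P. real (outer_degree F P x)) \<le> real d * outer_weight F P"
  using finite_F finite_P finite_member
proof (rule sum_outer_degree_le)
  fix A
  assume "A \<in> F" "\<not> A \<subseteq> P" "A \<inter> P \<noteq> {}"
  then have "4 * card A \<le> d"
    by (rule four_card_le_if_outer)
  then show "4 * real (card A) \<le> real d"
    by (metis of_nat_le_iff of_nat_mult of_nat_numeral)
qed

lemma outer_degree_ge:
  assumes "x \<in> P"
  shows "real (card (pile_N F P)) - real c + 1 - real (card {C \<in> pile_N F P. x \<in> C})
    \<le> real (outer_degree F P x)"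
proof -
  have "card (pile_N F P) + 1 \<le> outer_degree F P x + c + card {C \<in> pile_N F P. x \<in> C}"
    using card_avoiding_bound[OF assms] card_containing_add_card_avoiding[of x] by linarith
  then have "real (card (pile_N F P) + 1) \<le> real (outer_degree F P x + c + card {C \<in> pile_N F P. x \<in> C})"
    by (simp only: of_nat_le_iff)
  then show ?thesis
    by simp
qed

lemma two_pow_le_if_contains_not_good:
  assumes N: "N \<in> pile_N F P" and contains: "\<And>x. x \<in> P \<Longrightarrow> \<not> good F d x \<Longrightarrow> x \<in> N"
  shows "2 ^ card N \<le> d"
proof (rule ccontr)
  assume "\<not> 2 ^ card N \<le> d"
  let ?N = "pile_N F P"
  let ?a = "\<lambda>x. real (card {C \<in> ?N. x \<in> C})"
  let ?ot = "\<lambda>x. real (outer_degree F P x)"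
  define M where "M = P - N"
  define T where "T = real (card ?N) - real c + 1"
  have "card M = d - card N"
    unfolding M_def using subset_P_if_in_pile_N[OF N] finite_P card_P
    by (simp add: card_Diff_subset finite_subset)
  with six_card_le[OF N] have "5 * d \<le> 6 * card M"
    by linarith
  then have "real (5 * d) \<le> real (6 * card M)"
    by (simp only: of_nat_le_iff)
  then have m_ge: "5 * real d \<le> 6 * real (card M)"
    by simp
  have "card M \<le> card {x \<in> P. good F d x}"
    using contains finite_P unfolding M_def by (intro card_mono) auto
  then have E_ge: "real (card M) / 2 \<le> outer_weight F P"
    using card_good_le_outer_weight by linarith
  have "6 * (\<Sum>x\<in>M. card {C \<in> ?N. x \<in> C}) \<le> d * d"
    unfolding M_def using N \<open>\<not> 2 ^ card N \<le> d\<close> by (intro sum_card_containing_le) auto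
  then have "real (6 * (\<Sum>x\<in>M. card {C \<in> ?N. x \<in> C})) \<le> real (d * d)"
    by (simp only: of_nat_le_iff)
  then have SA_le: "6 * (\<Sum>x\<in>M. ?a x) \<le> real d * real d"
    by simp
  have "(\<Sum>x\<in>M. T - ?a x) \<le> (\<Sum>x\<in>M. ?ot x)"
    unfolding M_def T_def using outer_degree_ge by (intro sum_mono) auto
  also have "\<dots> \<le> (\<Sum>x\<in>P. ?ot x)"
    unfolding M_def using finite_P by (intro sum_mono2) auto
  finally have "4 * (real (card M) * T - (\<Sum>x\<in>M. ?a x)) \<le> real d * outer_weight F P"
    using four_sum_outer_degree_le by (simp add: sum_subtractf)
  moreover have "outer_weight F P < T"
    unfolding T_def by (rule outer_weight_lt)
  ultimately show False
    using quadratic_bounds_contradiction[OF _ m_ge E_ge _ SA_le] fifty_le_d by simp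
qed

lemma two_pow_le_card_good_add_card:
  assumes "N \<in> pile_N F P"
  shows "2 ^ card N \<le> card {x \<in> P. good F d x} + card N"
proof (cases "\<exists>y\<in>P. \<not> good F d y \<and> y \<notin> N")
  case True
  then show ?thesis
    using assms two_pow_le_if_avoids_not_good by blast
next
  case False
  have "N \<subseteq> P"
    using assms by (rule subset_P_if_in_pile_N)
  then have "card (P - N) = d - card N" and "card N \<le> d"
    using finite_P card_P by (auto simp: card_Diff_subset finite_subset intro: card_mono)
  moreover have "card (P - N) \<le> card {x \<in> P. good F d x}"
    using False finite_P by (intro card_mono) auto
  moreover have "2 ^ card N \<le> d"
    using assms False by (intro two_pow_le_if_contains_not_good) auto
  ultimately show ?thesis
    by linarith
qed

end

theorem mainTheorem18:
  fixes n d c :: nat and F :: "nat set set" and P :: "nat set"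
  assumes "d \<ge> 50"
    and "c \<in> {1..d}"
    and "F \<subseteq> Pow {1..n}"
    and "hereditary F"
    and "int (min_degree n F) \<ge> 2^(d-1) - int c + 1"
    and "isolated_pile n d F P"
    and "(\<Sum>x\<in>P. weight F x) < 2^d - real c"
    and "card {x \<in> P. good F d x} \<ge> 1"
  shows "\<forall>N \<in> pile_N F P. card N \<le> f_of (card {x \<in> P. good F d x})"
proof
  fix N
  assume N: "N \<in> pile_N F P"
  interpret low_weight_pile n d c F P
    using assms(1-5,7) assms(6)[unfolded isolated_pile_def] by unfold_locales auto
  have "2 ^ card N \<le> card {x \<in> P. good F d x} + card N"
    using N by (rule two_pow_le_card_good_add_card)
  then have "int (2 ^ card N) \<le> int (card {x \<in> P. good F d x} + card N)"
    by (simp only: of_nat_le_iff)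
  then show "card N \<le> f_of (card {x \<in> P. good F d x})"
    using assms(8) by (intro le_f_of) auto
qed

end
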